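(* In the setting described in the context, assume that $q=p^h$ is a square, that $t$ is a prime divisor of $q^2+q+1$, and that $p \bmod t$ is a generator of the multiplicative group of $\mathbb{Z}_t$. Then $t$ divides either $q+\sqrt q+1$ or $q-\sqrt q+1$, and there is $\varepsilon\in\{1,-1\}$ such that $$w_1=w_2=\dots=w_{t-1}=\frac{q+1+\varepsilon\sqrt q}{t},\qquad w_0=\frac{q+1+\varepsilon(1-t)\sqrt q}{t}.$$
   Context: Let $q=p^h$ with $p$ prime, $h\ge1$. Let $\alpha$ be a primitive element of $\mathbb{F}_{q^3}$; the points of $PG(2,q)$ are the 1-dimensional $\mathbb{F}_q$-subspaces of $\mathbb{F}_{q^3}$, and $P_i$ denotes the point represented by $\alpha^i$, so $PG(2,q)=\{P_0,\dots,P_{q^2+q}\}$. Let $\tau:P_i\mapsto P_{ip\bmod(q^2+q+1)}$ (a collineation) and let $\ell_0$ be a line of $PG(2,q)$ fixed by $\tau$. Let $t$ be a positive divisor of $q^2+q+1$ and for $i=0,\dots,t-1$ let $O_i=\{P_u:u\equiv i\pmod t\}$. For $u=0,\dots,t-1$ let $w_u=|\ell_0\cap O_u|$. *)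

theory Defs
  imports Complex_Main "HOL-Number_Theory.Residue_Primitive_Roots"
begin

text \<open>The ambient field F_{q^3} is a finite field type 'a with CARD('a) = q^3.
  The subfield F_q is the set of fixed points of x |-> x^q.\<close>

definition Fq :: "nat \<Rightarrow> 'a::field set" where
  "Fq q = {x. x ^ q = x}"

definition Fq_subspace :: "nat \<Rightarrow> 'a::field set \<Rightarrow> bool" where
  "Fq_subspace q W \<longleftrightarrow> 0 \<in> W \<and> (\<forall>x\<in>W. \<forall>y\<in>W. x + y \<in> W)
     \<and> (\<forall>c\<in>Fq q. \<forall>x\<in>W. c * x \<in> W)"

text \<open>A line of PG(2,q) is a 2-dimensional F_q-subspace of F_{q^3}, i.e. an
  F_q-subspace with q^2 elements.\<close>
definition is_line :: "nat \<Rightarrow> 'a::field set \<Rightarrow> bool" where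
  "is_line q W \<longleftrightarrow> Fq_subspace q W \<and> card W = q ^ 2"

definition primitive_element :: "'a::field \<Rightarrow> bool" where
  "primitive_element \<alpha> \<longleftrightarrow> \<alpha> \<noteq> 0 \<and> (\<forall>x. x \<noteq> 0 \<longrightarrow> (\<exists>k::nat. x = \<alpha> ^ k))"

definition pts_on :: "'a::field \<Rightarrow> nat \<Rightarrow> 'a set \<Rightarrow> nat set" where
  "pts_on \<alpha> q W = {i. i < q^2 + q + 1 \<and> \<alpha> ^ i \<in> W}"

definition tau :: "nat \<Rightarrow> nat \<Rightarrow> nat \<Rightarrow> nat" where
  "tau p q i = (i * p) mod (q^2 + q + 1)"

definition wcount :: "'a::field \<Rightarrow> nat \<Rightarrow> nat \<Rightarrow> 'a set \<Rightarrow> nat \<Rightarrow> nat" where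
  "wcount \<alpha> q t W u = card {i \<in> pts_on \<alpha> q W. i mod t = u}"

end

theory Submission
  imports Defs
begin

(* The indices of the points of l0 form a planar difference set D modulo N = q^2 + q + 1:
   |D| = q + 1, and since l0 meets its image under multiplication by alpha^d for every d,
   each nonzero residue is a difference of two elements of D, hence exactly once by counting.
   Since l0 is tau-invariant, D is closed under multiplication by p, and as p generates the
   units modulo t, all classes O_u with u <> 0 meet l0 in the same number w of points.
   Counting points gives w0 + (t - 1) w = q + 1; counting ordered pairs in a common class,
   i.e. with difference divisible by t, gives w0^2 + (t - 1) w^2 = q + N / t.  Eliminating
   w0 leaves (t w - q - 1)^2 = q = s^2. *)

text \<open>For \<open>i, j < N\<close>, \<open>(i + N - j) mod N\<close> is the residue of \<open>i - j\<close> modulo \<open>N\<close>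
  (adding \<open>N\<close> first avoids truncated subtraction).\<close>

definition diff_count :: "nat \<Rightarrow> nat set \<Rightarrow> nat \<Rightarrow> nat" where
  "diff_count N D d = card {(i, j) \<in> D \<times> D. (i + N - j) mod N = d}"

definition planar_difference_set :: "nat \<Rightarrow> nat set \<Rightarrow> bool" where
  "planar_difference_set N D \<longleftrightarrow> D \<subseteq> {..<N} \<and> (\<forall>d\<in>{1..<N}. diff_count N D d = 1)"

lemma sum_diff_count:
  assumes "D \<subseteq> {..<N}"
  shows "(\<Sum>d<N. diff_count N D d) = card D * card D"
proof -
  define \<delta> where "\<delta> = (\<lambda>(i, j). (i + N - j) mod N)"
  have fin: "finite (D \<times> D)" using assms finite_subset by blast
  have "\<delta> ` (D \<times> D) \<subseteq> {..<N}"
    using assms by (auto simp: \<delta>_def)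
  then have "(\<Sum>d<N. \<Sum>x\<in>{x \<in> D \<times> D. \<delta> x = d}. 1) = (\<Sum>x\<in>D \<times> D. 1::nat)"
    using fin by (intro sum.group) auto
  moreover have "{x \<in> D \<times> D. \<delta> x = d} = {(i, j) \<in> D \<times> D. (i + N - j) mod N = d}" for d
    by (auto simp: \<delta>_def)
  ultimately show ?thesis by (simp add: diff_count_def card_cartesian_product)
qed

lemma dvd_add_modulus_diff_iff:
  fixes i j N :: nat
  assumes "i < N" "j < N"
  shows "N dvd i + N - j \<longleftrightarrow> i = j"
proof (cases "j \<le> i")
  case True
  then have "i + N - j = (i - j) + N" by linarith
  then have "(i + N - j) mod N = i - j" using assms by (simp only: mod_add_self2 mod_less diff_less_mono)
  then show ?thesis using True by (simp add: dvd_eq_mod_eq_0)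
next
  case False
  then have "(i + N - j) mod N = i + N - j" using assms by (intro mod_less) linarith
  then show ?thesis using False assms by (simp add: dvd_eq_mod_eq_0)
qed

lemma add_mod_diff_mod:
  fixes j d N :: nat
  assumes "j < N" "d < N"
  shows "((j + d) mod N + N - j) mod N = d"
proof (cases "j + d < N")
  case True
  then have "(j + d) mod N + N - j = d + N" by simp
  then show ?thesis using assms(2) by simp
next
  case False
  then have "(j + d) mod N = j + d - N" using assms by (simp add: mod_if)
  then have "(j + d) mod N + N - j = d" using False by simp
  then show ?thesis using assms(2) by simp
qed

lemma diff_count_0:
  assumes "D \<subseteq> {..<N}"
  shows "diff_count N D 0 = card D"
proof -
  have "{(i, j) \<in> D \<times> D. (i + N - j) mod N = 0} = (\<lambda>i. (i, i)) ` D"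
  proof -
    have "N dvd i + N - j \<longleftrightarrow> i = j" if "i \<in> D" "j \<in> D" for i j
      using assms that by (intro dvd_add_modulus_diff_iff) auto
    then show ?thesis by auto
  qed
  then show ?thesis by (simp add: diff_count_def card_image inj_on_def)
qed

lemma planar_difference_setI:
  assumes "D \<subseteq> {..<N}" and "card D * card D = card D + (N - 1)"
    and "\<forall>d\<in>{1..<N}. diff_count N D d \<noteq> 0"
  shows "planar_difference_set N D"
  unfolding planar_difference_set_def
proof (intro conjI ballI assms(1))
  fix d assume d: "d \<in> {1..<N}"
  show "diff_count N D d = 1"
  proof (rule ccontr)
    assume "diff_count N D d \<noteq> 1"
    with assms(3) d have "1 < diff_count N D d" by fastforce
    moreover have "diff_count N D e \<ge> 1" if "e \<in> {1..<N}" for e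
      using assms(3) that by (simp add: Suc_le_eq)
    ultimately have "(\<Sum>e\<in>{1..<N}. 1) < (\<Sum>e\<in>{1..<N}. diff_count N D e)"
      using d by (intro sum_strict_mono_ex1 bexI[of _ d]) auto
    moreover have "{..<N} = insert 0 {1..<N}" using d by auto
    then have "(\<Sum>e\<in>{1..<N}. diff_count N D e) = N - 1"
      using sum_diff_count[OF assms(1)] diff_count_0[OF assms(1)] assms(2) by simp
    ultimately show False by simp
  qed
qed

lemma card_below_mult_mod_in:
  fixes D :: "nat set"
  assumes "D \<subseteq> {..<N}"
  shows "card {k. k < M * N \<and> k mod N \<in> D} = M * card D"
proof -
  have "bij_betw (\<lambda>(j, m). j + N * m) (D \<times> {..<M}) {k. k < M * N \<and> k mod N \<in> D}"
  proof (rule bij_betwI[where g = "\<lambda>k. (k mod N, k div N)"])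
    have "j + N * m < M * N" if "j < N" "m < M" for j m
    proof -
      have "j + N * m < N * Suc m" using that by simp
      also have "\<dots> \<le> N * M" using that by (intro mult_le_mono2) simp
      finally show ?thesis by (simp add: mult.commute)
    qed
    then show "(\<lambda>(j, m). j + N * m) \<in> D \<times> {..<M} \<rightarrow> {k. k < M * N \<and> k mod N \<in> D}"
      using assms by auto
    show "(\<lambda>k. (k mod N, k div N)) \<in> {k. k < M * N \<and> k mod N \<in> D} \<rightarrow> D \<times> {..<M}"
      by (auto simp: less_mult_imp_div_less)
  qed (use assms in auto)
  from bij_betw_same_card[OF this] show ?thesis by (simp add: card_cartesian_product mult.commute)
qed

lemma card_multiples_in_range:
  fixes t N :: nat
  assumes "0 < t" "t dvd N"
  shows "card {d \<in> {1..<N}. t dvd d} = N div t - 1"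
proof -
  obtain M where N: "N = t * M" using assms(2) by blast
  have "{d \<in> {1..<N}. t dvd d} = (*) t ` {1..<M}"
    using assms(1) by (auto simp: N elim!: dvdE)
  then show ?thesis using assms(1) by (simp add: N card_image inj_on_def)
qed

lemma card_pairs_same_residue:
  assumes "planar_difference_set N D" "0 < t" "t dvd N"
  shows "card {(i, j) \<in> D \<times> D. i mod t = j mod t} = card D + (N div t - 1)"
proof -
  have D: "D \<subseteq> {..<N}" "\<forall>d\<in>{1..<N}. diff_count N D d = 1"
    using assms(1) by (simp_all add: planar_difference_set_def)
  define \<delta> where "\<delta> = (\<lambda>(i, j). (i + N - j) mod N)"
  define T where "T = {d \<in> {1..<N}. t dvd d}"
  have fin: "finite (D \<times> D)" using D(1) finite_subset by blast
  have "i mod t = j mod t \<longleftrightarrow> t dvd \<delta> (i, j)" if "j < N" for i j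
  proof -
    have "i mod t = j mod t \<longleftrightarrow> (i + N) mod t = j mod t"
      using assms(3) by (simp add: mod_add_right_eq[symmetric])
    also have "\<dots> \<longleftrightarrow> t dvd i + N - j" using that by (intro mod_eq_dvd_iff_nat) simp
    also have "\<dots> \<longleftrightarrow> t dvd \<delta> (i, j)" using assms(3) by (simp add: \<delta>_def dvd_mod_iff)
    finally show ?thesis .
  qed
  then have pairs: "{(i, j) \<in> D \<times> D. i mod t = j mod t} = {x \<in> D \<times> D. \<delta> x \<in> insert 0 T}"
    using D(1) by (auto simp: T_def \<delta>_def)
  have "\<delta> ` (D \<times> D) \<subseteq> {..<N}" using D(1) by (auto simp: \<delta>_def)
  then have "(\<Sum>d\<in>insert 0 T. \<Sum>x\<in>{x \<in> {x \<in> D \<times> D. \<delta> x \<in> insert 0 T}. \<delta> x = d}. 1)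
      = (\<Sum>x\<in>{x \<in> D \<times> D. \<delta> x \<in> insert 0 T}. 1::nat)"
    using fin by (intro sum.group) (auto simp: T_def)
  moreover have "{x \<in> {x \<in> D \<times> D. \<delta> x \<in> insert 0 T}. \<delta> x = d} = {(i, j) \<in> D \<times> D. (i + N - j) mod N = d}"
    if "d \<in> insert 0 T" for d
    using that by (auto simp: \<delta>_def)
  ultimately have "card {(i, j) \<in> D \<times> D. i mod t = j mod t} = (\<Sum>d\<in>insert 0 T. diff_count N D d)"
    unfolding pairs by (simp add: diff_count_def)
  also have "\<dots> = card D + card T"
    using D by (simp add: T_def diff_count_0)
  finally show ?thesis using card_multiples_in_range[OF assms(2,3)] by (simp add: T_def)
qed

lemma sum_card_residue_classes:
  fixes D :: "nat set"
  assumes "finite D" "0 < t"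
  shows "(\<Sum>u<t. card {i \<in> D. i mod t = u}) = card D"
proof -
  have "(\<lambda>i. i mod t) ` D \<subseteq> {..<t}" using assms(2) by auto
  then show ?thesis using assms(1) sum.group[of D "{..<t}" "\<lambda>i. i mod t" "\<lambda>_. 1::nat"] by simp
qed

lemma sum_square_card_residue_classes:
  fixes D :: "nat set"
  assumes "finite D" "0 < t"
  shows "(\<Sum>u<t. card {i \<in> D. i mod t = u} ^ 2) = card {(i, j) \<in> D \<times> D. i mod t = j mod t}"
proof -
  define P where "P = {(i, j) \<in> D \<times> D. i mod t = j mod t}"
  have "(\<lambda>x. fst x mod t) ` P \<subseteq> {..<t}" using assms(2) by auto
  then have "(\<Sum>u<t. \<Sum>x\<in>{x \<in> P. fst x mod t = u}. 1) = (\<Sum>x\<in>P. 1::nat)"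
    using assms(1) by (intro sum.group finite_subset[of P "D \<times> D"]) (auto simp: P_def)
  moreover have "{x \<in> P. fst x mod t = u} = {i \<in> D. i mod t = u} \<times> {i \<in> D. i mod t = u}" for u
    by (auto simp: P_def)
  ultimately show ?thesis by (simp add: P_def power2_eq_square card_cartesian_product)
qed

lemma card_residue_class_mult:
  fixes D :: "nat set"
  assumes "finite D" "(\<lambda>i. i * p mod N) ` D = D" "t dvd N" "coprime p t" "u < t"
  shows "card {i \<in> D. i mod t = u * p mod t} = card {i \<in> D. i mod t = u}"
proof -
  define \<tau> where "\<tau> i = i * p mod N" for i
  have "inj_on \<tau> D" using assms(1,2) by (intro eq_card_imp_inj_on) (simp_all add: \<tau>_def)
  then have inj: "inj_on \<tau> {i \<in> D. i mod t = u}" by (rule inj_on_subset) auto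
  have "\<tau> i mod t = u * p mod t \<longleftrightarrow> i mod t = u" for i
  proof -
    have "\<tau> i mod t = u * p mod t \<longleftrightarrow> [i * p = u * p] (mod t)"
      using assms(3) by (simp add: \<tau>_def cong_def mod_mod_cancel)
    also have "\<dots> \<longleftrightarrow> [i = u] (mod t)" using assms(4) by (simp add: cong_mult_rcancel_nat coprime_commute)
    finally show ?thesis using assms(5) by (simp add: cong_def)
  qed
  then have "{i \<in> \<tau> ` D. i mod t = u * p mod t} = \<tau> ` {i \<in> D. i mod t = u}" by auto
  then show ?thesis using assms(2) card_image[OF inj] by (simp add: \<tau>_def)
qed

lemma card_residue_class_primroot:
  fixes D :: "nat set"
  assumes "finite D" "(\<lambda>i. i * p mod N) ` D = D" "t dvd N"
    and "prime t" "residue_primroot t p" "u \<in> {1..<t}"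
  shows "card {i \<in> D. i mod t = u} = card {i \<in> D. i mod t = 1}"
proof -
  have t: "1 < t" using assms(4) by (rule prime_gt_1_nat)
  have "coprime p t" using assms(5) by (simp add: residue_primroot_def coprime_commute)
  have powers: "card {i \<in> D. i mod t = p ^ k mod t} = card {i \<in> D. i mod t = 1}" for k
  proof (induction k)
    case (Suc k)
    have "p ^ Suc k mod t = (p ^ k mod t) * p mod t" by (simp add: mod_mult_left_eq mult.commute[of p])
    then show ?case
      using card_residue_class_mult[OF assms(1-3) \<open>coprime p t\<close>, of "p ^ k mod t"] Suc t by simp
  qed (use t in simp)
  have "u \<in> totatives t" using assms(4,6) by (simp add: totatives_prime)
  then obtain k where "u = p ^ k mod t"
    using residue_primroot_is_generator[OF t assms(5)] by (auto simp: bij_betw_def)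
  then show ?thesis using powers by simp
qed

lemma residue_class_moments:
  fixes D :: "nat set"
  assumes D: "planar_difference_set N D"
    and tau: "(\<lambda>i. i * p mod N) ` D = D"
    and t: "prime t" "t dvd N" "residue_primroot t p"
  defines "w \<equiv> card {i \<in> D. i mod t = 1}" and "w0 \<equiv> card {i \<in> D. i mod t = 0}"
  shows "\<forall>u\<in>{1..<t}. card {i \<in> D. i mod t = u} = w"
    and "w0 + (t - 1) * w = card D"
    and "w0 ^ 2 + (t - 1) * w ^ 2 = card D + (N div t - 1)"
proof -
  have fin: "finite D" using D finite_subset by (auto simp: planar_difference_set_def)
  have t0: "0 < t" using t(1) prime_gt_0_nat by blast
  show classes: "\<forall>u\<in>{1..<t}. card {i \<in> D. i mod t = u} = w"
    unfolding w_def using card_residue_class_primroot[OF fin tau t(2,1,3)] by blast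
  have split: "(\<Sum>u<t. g (card {i \<in> D. i mod t = u})) = g w0 + (t - 1) * g w" for g :: "nat \<Rightarrow> nat"
  proof -
    have "{..<t} = insert 0 {1..<t}" using t0 by auto
    then have "(\<Sum>u<t. g (card {i \<in> D. i mod t = u})) = g w0 + (\<Sum>u\<in>{1..<t}. g w)"
      using classes by (simp add: w0_def)
    then show ?thesis by simp
  qed
  show "w0 + (t - 1) * w = card D"
    using split[of id] sum_card_residue_classes[OF fin t0] by simp
  show "w0 ^ 2 + (t - 1) * w ^ 2 = card D + (N div t - 1)"
    using split[of "\<lambda>x. x ^ 2"] sum_square_card_residue_classes[OF fin t0]
      card_pairs_same_residue[OF D t0 t(2)] by simp
qed

lemma square_from_class_moments:
  fixes w0 w q t M :: int
  assumes "w0 + (t - 1) * w = q + 1" "w0 ^ 2 + (t - 1) * w ^ 2 = q + M"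
    and "t * M = q ^ 2 + q + 1" "1 < t"
  shows "(t * w - (q + 1)) ^ 2 = q"
proof -
  have w0: "w0 = q + 1 - (t - 1) * w" using assms(1) by simp
  have "t * (w0 ^ 2 + (t - 1) * w ^ 2) = (t - 1) * (t * w - (q + 1)) ^ 2 + (q + 1) ^ 2"
    unfolding w0 by (simp add: power2_eq_square algebra_simps)
  moreover have "t * (q + M) = (t - 1) * q + (q + 1) ^ 2"
    unfolding distrib_left assms(3) by (simp add: power2_eq_square algebra_simps)
  ultimately have "(t - 1) * (t * w - (q + 1)) ^ 2 = (t - 1) * q"
    using assms(2) by (metis add_right_cancel)
  then show ?thesis using assms(4) by simp
qed

lemma class_sizes_from_moments:
  fixes w0 w q s t :: nat
  assumes t: "1 < t" "t dvd q^2 + q + 1" and q: "q = s^2"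
    and first: "w0 + (t - 1) * w = q + 1"
    and second: "w0^2 + (t - 1) * w^2 = q + 1 + ((q^2 + q + 1) div t - 1)"
  shows "(t dvd q + s + 1 \<or> t dvd q - s + 1) \<and>
    (\<exists>\<epsilon>::int. \<epsilon> \<in> {1, -1} \<and>
      real w = real_of_int (int q + 1 + \<epsilon> * int s) / real t \<and>
      real w0 = real_of_int (int q + 1 + \<epsilon> * (1 - int t) * int s) / real t)"
proof -
  obtain M where M: "q^2 + q + 1 = t * M" using t(2) by blast
  then have "0 < M" by (cases M) auto
  have t1: "int (t - 1) = int t - 1" using t(1) by simp
  have first': "int w0 + (int t - 1) * int w = int q + 1"
    using arg_cong[OF first, of int] unfolding of_nat_add of_nat_mult t1 by simp
  have "w0^2 + (t - 1) * w^2 = q + M" using second t(1) \<open>0 < M\<close> unfolding M by simp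
  from arg_cong[OF this, of int]
  have second': "int w0 ^ 2 + (int t - 1) * int w ^ 2 = int q + int M" unfolding of_nat_add of_nat_mult of_nat_power t1 by simp
  have M': "int t * int M = int q ^ 2 + int q + 1"
    using arg_cong[OF M, of int] unfolding of_nat_add of_nat_mult of_nat_power by simp
  have "(int t * int w - (int q + 1)) ^ 2 = int s ^ 2"
    using square_from_class_moments[OF first' second' M'] t(1) q by simp
  then have "int t * int w - (int q + 1) = int s \<or> int t * int w - (int q + 1) = - int s"
    by (simp add: power2_eq_iff)
  then obtain \<epsilon> :: int where \<epsilon>: "\<epsilon> \<in> {1, -1}" "int t * int w = int q + 1 + \<epsilon> * int s"
    by (metis add_diff_cancel_left' diff_add_cancel insertCI mult_1 mult_minus_left)
  have w0: "int w0 = int q + 1 - (int t - 1) * int w" using first' by simp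
  have "int t * int w0 = int t * (int q + 1) - (int t - 1) * (int t * int w)"
    unfolding w0 by (simp add: algebra_simps)
  then have \<epsilon>0: "int t * int w0 = int q + 1 + \<epsilon> * (1 - int t) * int s"
    unfolding \<epsilon>(2) by (simp add: algebra_simps)
  have "s \<le> q" using q by (cases s) (auto simp: power2_eq_square)
  then have "int (t * w) = int (q + s + 1) \<or> int (t * w) = int (q - s + 1)"
    using \<epsilon> by (auto simp: of_nat_diff)
  then have "t dvd q + s + 1 \<or> t dvd q - s + 1" unfolding of_nat_eq_iff by (metis dvd_triv_left)
  moreover have "real n = real_of_int X / real t" if "int t * int n = X" for n X
    using t(1) by (simp flip: that add: field_simps)
  ultimately show ?thesis using \<epsilon> \<epsilon>0 by blast
qed

lemma field_pow_card_minus_one: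
  fixes x :: "'a::{field, finite}"
  assumes "x \<noteq> 0"
  shows "x ^ (card (UNIV :: 'a set) - 1) = 1"
proof -
  define G where "G = (UNIV :: 'a set) - {0}"
  have inj: "inj_on ((*) x) G" using assms by (auto simp: inj_on_def)
  then have "(*) x ` G = G" using assms by (intro endo_inj_surj) (auto simp: G_def)
  then have "prod id G = prod ((*) x) G" using prod.reindex[OF inj, of id] by simp
  also have "\<dots> = x ^ card G * prod id G" by (simp add: prod.distrib)
  finally have "x ^ card G = 1" by (simp add: G_def)
  then show ?thesis by (simp add: G_def card_Diff_subset)
qed

lemma primitive_element_pow_inj_on:
  fixes \<alpha> :: "'a::{field, finite}"
  assumes "primitive_element \<alpha>"
  shows "inj_on (\<lambda>k. \<alpha> ^ k) {..<card (UNIV :: 'a set) - 1}"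
proof (rule ccontr)
  assume "\<not> ?thesis"
  then obtain a b where ab: "a < b" "b < card (UNIV :: 'a set) - 1" "\<alpha> ^ a = \<alpha> ^ b"
    unfolding inj_on_def by (metis lessThan_iff linorder_neqE_nat)
  define r where "r = b - a"
  have "\<alpha> \<noteq> 0" using assms by (simp add: primitive_element_def)
  moreover have "\<alpha> ^ a * \<alpha> ^ r = \<alpha> ^ a * 1"
    using ab by (metis le_add_diff_inverse less_imp_le mult_1_right power_add r_def)
  ultimately have r: "\<alpha> ^ r = 1" "0 < r" "r < card (UNIV :: 'a set) - 1"
    using ab by (auto simp: r_def)
  have covered: "UNIV - {0} \<subseteq> (\<lambda>k. \<alpha> ^ k) ` {..<r}"
  proof
    fix x :: 'a assume "x \<in> UNIV - {0}"
    then obtain k where k: "x = \<alpha> ^ k" using assms by (auto simp: primitive_element_def)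
    have "\<alpha> ^ k = (\<alpha> ^ r) ^ (k div r) * \<alpha> ^ (k mod r)"
      by (simp flip: power_mult power_add)
    then show "x \<in> (\<lambda>k. \<alpha> ^ k) ` {..<r}" using k r by auto
  qed
  have "card (UNIV - {0 :: 'a}) \<le> r"
    using card_mono[OF _ covered] card_image_le[of "{..<r}" "\<lambda>k. \<alpha> ^ k"] by simp
  then show False using r by (simp add: card_Diff_subset)
qed

lemma primitive_element_exponent:
  fixes \<alpha> :: "'a::{field, finite}"
  assumes "primitive_element \<alpha>" "x \<noteq> 0"
  obtains k where "k < card (UNIV :: 'a set) - 1" "x = \<alpha> ^ k"
proof -
  define n where "n = card (UNIV :: 'a set) - 1"
  obtain k where k: "x = \<alpha> ^ k" using assms by (auto simp: primitive_element_def)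
  have "\<alpha> ^ n = 1" using assms(1) field_pow_card_minus_one by (auto simp: n_def primitive_element_def)
  then have "\<alpha> ^ k = \<alpha> ^ (k mod n)"
    by (metis div_mult_mod_eq mult.commute mult_1 power_add power_mult power_one)
  moreover have "card {0 :: 'a, 1} \<le> card (UNIV :: 'a set)" by (rule card_mono) auto
  then have "0 < n" by (simp add: n_def)
  ultimately show ?thesis using that[of "k mod n"] k by (simp add: n_def)
qed

lemma Fq_power:
  assumes "c \<in> Fq q"
  shows "c ^ m \<in> Fq q"
proof -
  have "(c ^ m) ^ q = (c ^ q) ^ m" by (simp only: mult.commute flip: power_mult)
  then show ?thesis using assms by (simp add: Fq_def)
qed

lemma Fq_inverse: "c \<in> Fq q \<Longrightarrow> inverse c \<in> Fq q"
  by (simp add: Fq_def power_inverse)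

lemma Fq_subspace_diff:
  fixes W :: "'a::{field, finite} set"
  assumes "Fq_subspace q W" "x \<in> W" "y \<in> W"
  shows "x - y \<in> W"
proof -
  have add: "a + b \<in> W" if "a \<in> W" "b \<in> W" for a b
    using assms(1) that by (simp add: Fq_subspace_def)
  have "inj_on (\<lambda>a. a + y) W" by (simp add: inj_on_def)
  then have "(\<lambda>a. a + y) ` W = W" using add assms(3) by (intro endo_inj_surj) auto
  moreover have "0 \<in> W" using assms(1) by (simp add: Fq_subspace_def)
  ultimately obtain a where "a \<in> W" "a + y = 0" by (metis imageE)
  then have "-y \<in> W" by (simp add: eq_neg_iff_add_eq_0 [symmetric])
  then show ?thesis using add[OF assms(2) \<open>-y \<in> W\<close>] by simp
qed

lemma line_meets_scaled_line:
  fixes \<beta> :: "'a::{field, finite}"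
  assumes "is_line q W" "card (UNIV :: 'a set) = q ^ 3" "1 < q" "\<beta> \<noteq> 0"
  obtains x where "x \<noteq> 0" "x \<in> W" "\<beta> * x \<in> W"
proof (rule ccontr)
  assume "\<not> thesis"
  with that have disjoint: "z = 0" if "z \<in> W" "\<beta> * z \<in> W" for z
    using that by blast
  have sub: "Fq_subspace q W" and cardW: "card W = q ^ 2"
    using assms(1) by (simp_all add: is_line_def)
  define V where "V = {v. \<beta> * v \<in> W}"
  have "bij_betw ((*) \<beta>) V W"
    using assms(4) by (intro bij_betwI[where g = "\<lambda>y. y / \<beta>"]) (auto simp: V_def)
  then have cardV: "card V = q ^ 2" using cardW by (simp add: bij_betw_same_card)
  \<comment> \<open>\<open>W\<close> and \<open>V\<close> meet only in \<open>0\<close>, so \<open>W + V\<close> would have \<open>q\<^sup>4 > q\<^sup>3\<close> elements\<close>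
  have "inj_on (\<lambda>(w, v). w + v) (W \<times> V)"
  proof (rule inj_onI, clarify)
    fix w v w' v' assume "w \<in> W" "v \<in> V" "w' \<in> W" "v' \<in> V" "w + v = w' + v'"
    moreover from this have "w - w' = v' - v" by (simp add: algebra_simps)
    then have "\<beta> * (w - w') = \<beta> * v' - \<beta> * v" by (simp add: right_diff_distrib)
    ultimately have "w - w' \<in> W" "\<beta> * (w - w') \<in> W"
      using Fq_subspace_diff[OF sub] by (simp_all add: V_def)
    then have "w - w' = 0" by (rule disjoint)
    then have "w = w'" by simp
    then show "w = w' \<and> v = v'" using \<open>w + v = w' + v'\<close> by simp
  qed
  then have "card (W \<times> V) \<le> card (UNIV :: 'a set)" by (rule card_inj_on_le) auto
  then have "q ^ 2 * q ^ 2 \<le> q ^ 3" using assms(2) cardW cardV by (simp add: card_cartesian_product)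
  moreover have "q ^ 3 < q ^ 2 * q ^ 2"
    using assms(3) by (simp add: power_add[symmetric] power_strict_increasing)
  ultimately show False by simp
qed

locale singer_line =
  fixes \<alpha> :: "'a::{field, finite}" and q :: nat and W :: "'a set"
  assumes card_UNIV: "card (UNIV :: 'a set) = q ^ 3"
    and q_gt_1: "1 < q"
    and primitive: "primitive_element \<alpha>"
    and line: "is_line q W"
begin

abbreviation N :: nat where "N \<equiv> q ^ 2 + q + 1"

lemma alpha_nonzero: "\<alpha> \<noteq> 0"
  using primitive by (simp add: primitive_element_def)

lemma card_UNIV_minus_one: "card (UNIV :: 'a set) - 1 = (q - 1) * N"
proof -
  obtain r where "q = Suc r" using q_gt_1 by (cases q) auto
  then show ?thesis using card_UNIV by (simp add: algebra_simps power2_eq_square power3_eq_cube)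
qed

lemma pow_N_in_Fq: "\<alpha> ^ N \<in> Fq q"
proof -
  have "(\<alpha> ^ N) ^ (q - 1) = \<alpha> ^ (card (UNIV :: 'a set) - 1)"
    unfolding card_UNIV_minus_one by (simp only: mult.commute[of "q - 1"] flip: power_mult)
  then have "(\<alpha> ^ N) ^ (q - 1) = 1" using field_pow_card_minus_one[OF alpha_nonzero] by simp
  moreover have "(\<alpha> ^ N) ^ q = \<alpha> ^ N * (\<alpha> ^ N) ^ (q - 1)"
    using q_gt_1 by (simp flip: power_Suc)
  ultimately show ?thesis by (simp add: Fq_def)
qed

lemma pow_in_line_iff_mod: "\<alpha> ^ k \<in> W \<longleftrightarrow> \<alpha> ^ (k mod N) \<in> W"
proof -
  define c where "c = (\<alpha> ^ N) ^ (k div N)"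
  have c: "c \<in> Fq q" "c \<noteq> 0" using pow_N_in_Fq alpha_nonzero by (simp_all add: c_def Fq_power)
  have scale: "b * x \<in> W" if "x \<in> W" "b \<in> Fq q" for b x
    using line that by (simp add: is_line_def Fq_subspace_def)
  have "\<alpha> ^ k = \<alpha> ^ (N * (k div N) + k mod N)" by (simp only: mult_div_mod_eq)
  also have "\<dots> = c * \<alpha> ^ (k mod N)" by (simp only: c_def power_add power_mult)
  finally have k: "\<alpha> ^ k = c * \<alpha> ^ (k mod N)" .
  then have "\<alpha> ^ (k mod N) = inverse c * \<alpha> ^ k" using c(2) by simp
  then show ?thesis using k scale c Fq_inverse by metis
qed

lemma pts_on_subset: "pts_on \<alpha> q W \<subseteq> {..<N}"
  by (auto simp: pts_on_def)

lemma mod_in_pts_on_iff: "k mod N \<in> pts_on \<alpha> q W \<longleftrightarrow> \<alpha> ^ k \<in> W"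
  using pow_in_line_iff_mod by (simp add: pts_on_def)

lemma card_pts_on: "card (pts_on \<alpha> q W) = q + 1"
proof -
  define n where "n = card (UNIV :: 'a set) - 1"
  have "inj_on (\<lambda>k. \<alpha> ^ k) {k. k < n \<and> \<alpha> ^ k \<in> W}"
    using primitive_element_pow_inj_on[OF primitive] by (rule inj_on_subset) (auto simp: n_def)
  moreover have "(\<lambda>k. \<alpha> ^ k) ` {k. k < n \<and> \<alpha> ^ k \<in> W} = W - {0}"
  proof
    show "W - {0} \<subseteq> (\<lambda>k. \<alpha> ^ k) ` {k. k < n \<and> \<alpha> ^ k \<in> W}"
    proof
      fix x assume "x \<in> W - {0}"
      moreover obtain k where "k < n" "x = \<alpha> ^ k"
        using primitive_element_exponent[OF primitive, of x] \<open>x \<in> W - {0}\<close> by (auto simp: n_def)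
      ultimately show "x \<in> (\<lambda>k. \<alpha> ^ k) ` {k. k < n \<and> \<alpha> ^ k \<in> W}" by auto
    qed
  qed (use alpha_nonzero in auto)
  ultimately have "card (W - {0}) = card {k. k < n \<and> \<alpha> ^ k \<in> W}"
    by (metis card_image)
  \<comment> \<open>each point \<open>i\<close> of the line carries the \<open>q - 1\<close> vectors \<open>\<alpha> ^ (i + N * m)\<close>\<close>
  also have "{k. k < n \<and> \<alpha> ^ k \<in> W} = {k. k < (q - 1) * N \<and> k mod N \<in> pts_on \<alpha> q W}"
    by (simp only: n_def card_UNIV_minus_one mod_in_pts_on_iff)
  also have "card \<dots> = (q - 1) * card (pts_on \<alpha> q W)"
    by (rule card_below_mult_mod_in[OF pts_on_subset])
  moreover have "card (W - {0}) = q ^ 2 - 1"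
    using line by (simp add: is_line_def Fq_subspace_def card_Diff_subset)
  moreover have "q ^ 2 - 1 = (q - 1) * (q + 1)"
    by (simp add: power2_eq_square algebra_simps)
  ultimately have "(q - 1) * card (pts_on \<alpha> q W) = (q - 1) * (q + 1)" by simp
  then show ?thesis using q_gt_1 by (subst (asm) mult_left_cancel) auto
qed

lemma diff_count_pts_on_nonzero:
  assumes "d \<in> {1..<N}"
  shows "diff_count N (pts_on \<alpha> q W) d \<noteq> 0"
proof -
  have "\<alpha> ^ d \<noteq> 0" using alpha_nonzero by simp
  then obtain x where x: "x \<noteq> 0" "x \<in> W" "\<alpha> ^ d * x \<in> W"
    by (rule line_meets_scaled_line[OF line card_UNIV q_gt_1])
  obtain k where k: "x = \<alpha> ^ k" using primitive x(1) by (auto simp: primitive_element_def)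
  define j where "j = k mod N"
  have j: "j \<in> pts_on \<alpha> q W" using x(2) k mod_in_pts_on_iff by (simp add: j_def)
  have "\<alpha> ^ (k + d) \<in> W" using x(3) k by (simp add: power_add mult.commute)
  then have i: "(j + d) mod N \<in> pts_on \<alpha> q W"
    using mod_in_pts_on_iff by (simp add: j_def mod_add_left_eq)
  have "((j + d) mod N + N - j) mod N = d" using assms by (intro add_mod_diff_mod) (auto simp: j_def)
  define S where "S = {(i, j) \<in> pts_on \<alpha> q W \<times> pts_on \<alpha> q W. (i + N - j) mod N = d}"
  with i j \<open>((j + d) mod N + N - j) mod N = d\<close> have "((j + d) mod N, j) \<in> S" by simp
  moreover have "finite S"
    using pts_on_subset by (intro finite_subset[of S "{..<N} \<times> {..<N}"]) (auto simp: S_def)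
  ultimately have "card S \<noteq> 0" by (auto simp: card_eq_0_iff)
  then show ?thesis unfolding diff_count_def S_def .
qed

lemma planar_difference_set_pts_on: "planar_difference_set N (pts_on \<alpha> q W)"
proof (rule planar_difference_setI[OF pts_on_subset])
  show "card (pts_on \<alpha> q W) * card (pts_on \<alpha> q W) = card (pts_on \<alpha> q W) + (N - 1)"
    by (simp add: card_pts_on power2_eq_square algebra_simps)
qed (use diff_count_pts_on_nonzero in blast)

end

theorem proposition6:
  fixes \<alpha> :: "'a::{field, finite}" and W :: "'a set"
    and p h q s t :: nat
  assumes "prime p" and "h \<ge> 1" and "q = p ^ h"
    and "card (UNIV :: 'a set) = q ^ 3"
    and "primitive_element \<alpha>"
    and "is_line q W"
    and "tau p q ` pts_on \<alpha> q W = pts_on \<alpha> q W"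
    and "q = s ^ 2"
    and "prime t" and "t dvd q^2 + q + 1"
    and "residue_primroot t p"
  shows "(t dvd q + s + 1 \<or> t dvd q - s + 1) \<and>
    (\<exists>\<epsilon>::int. \<epsilon> \<in> {1, -1} \<and>
      (\<forall>u\<in>{1..t-1}. real (wcount \<alpha> q t W u) = real_of_int (int q + 1 + \<epsilon> * int s) / real t) \<and>
      real (wcount \<alpha> q t W 0) = real_of_int (int q + 1 + \<epsilon> * (1 - int t) * int s) / real t)"
proof -
  have p: "1 < p" using assms(1) by (rule prime_gt_1_nat)
  then have "p ^ 1 \<le> p ^ h" using assms(2) by (intro power_increasing) auto
  then have "1 < q" using p assms(3) by simp
  then interpret singer_line \<alpha> q W using assms(4-6) by unfold_locales
  have tau: "(\<lambda>i. i * p mod N) ` pts_on \<alpha> q W = pts_on \<alpha> q W"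
    using assms(7) unfolding tau_def .
  note moments = residue_class_moments[OF planar_difference_set_pts_on tau assms(9,10,11)]
  define w where "w = wcount \<alpha> q t W 1"
  define w0 where "w0 = wcount \<alpha> q t W 0"
  have t: "1 < t" using assms(9) by (rule prime_gt_1_nat)
  have "w0 + (t - 1) * w = q + 1" "w0 ^ 2 + (t - 1) * w ^ 2 = q + 1 + (N div t - 1)"
    using moments(2,3) unfolding w_def w0_def wcount_def card_pts_on .
  from class_sizes_from_moments[OF t assms(10,8) this]
  have "(t dvd q + s + 1 \<or> t dvd q - s + 1) \<and>
    (\<exists>\<epsilon>::int. \<epsilon> \<in> {1, -1} \<and>
      real w = real_of_int (int q + 1 + \<epsilon> * int s) / real t \<and>
      real w0 = real_of_int (int q + 1 + \<epsilon> * (1 - int t) * int s) / real t)" .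
  moreover have "wcount \<alpha> q t W u = w" if "u \<in> {1..t-1}" for u
  proof -
    have "u \<in> {1..<t}" using that t by auto
    then show ?thesis using moments(1) unfolding w_def wcount_def by blast
  qed
  ultimately show ?thesis unfolding w0_def by auto
qed

end
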